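(* Let $\imath:V\hookrightarrow U$ be an inclusion of regular molecules such that $n:=\dim U=\dim V$ and $V$ is round. If $\imath$ is a submolecule inclusion, then $\mathcal F_{n-1}V$ (identified with the induced subgraph of $\mathcal F_{n-1}U$ on the image of $\imath$) is a path-induced subgraph of $\mathcal F_{n-1}U$.
   Context: All posets are finite; $y$ covers $x$ if $x<y$ with nothing strictly between. A finite poset is graded if for each $x$ all maximal covering chains descending from $x$ have the same length $\dim x$; $U_n$ denotes elements of dimension $n$. An oriented graded poset is a finite graded poset with a label $\pm$ on each covering pair; $\Delta^\alpha x$ ($\nabla^\alpha x$) is the set of elements covered by (covering) $x$ with label $\alpha$. For closed (downward closed) $U$, with $\mathrm{cl}$ downward closure, $\max U$ maximal elements, $\dim U$ maximal dimension: $\Delta^\alpha_nU=\{x\in U_n:\nabla^{-\alpha}x\cap U=\emptyset\}$, $\partial^\alpha_nU=\mathrm{cl}(\Delta^\alpha_nU)\cup\bigcup_{k<n}\mathrm{cl}((\max U)_k)$ ($\emptyset$ for $n<0$), $\partial_nU=\partial^-_nU\cup\partial^+_nU$, subscript omitted for $n=\dim U-1$; $\Delta^\alpha_kx:=\Delta^\alpha_k\mathrm{cl}\{x\}$. Maps are functions with $f(\partial^\alpha_n\mathrm{cl}\{x\})=\partial^\alpha_n\mathrm{cl}\{f(x)\}$; inclusions are injective maps. $U\#_kV$ is the pushout of $U\hookleftarrow\partial^+_kU\cong\partial^-_kV\hookrightarrow V$; for $U,V$ of equal dimension $n$ with $\partial U\cong\partial V$ compatibly with $\partial^\pm$, $U\Rightarrow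 V$ is that pushout with a new element $\top$ of dimension $n+1$, $\Delta^-\top=U_n$, $\Delta^+\top=V_n$. $U$ is round if $\partial^-_nU\cap\partial^+_nU=\partial_{n-1}U$ for all $n<\dim U$. Regular molecules: smallest isomorphism-closed class containing the point, closed under $U\#_kV$ ($k<\min(\dim U,\dim V)$) and $U\Rightarrow V$ for round regular molecules of equal dimension. Submolecule inclusions: smallest class of inclusions of regular molecules containing isomorphisms and $U\hookrightarrow U\#_kV\hookleftarrow V$, closed under composition. $\mathcal F_kU$: directed graph with vertices $\bigcup_{i>k}U_i$ and edge $x\to y$ iff $\Delta^+_kx\cap\Delta^-_ky\ne\emptyset$. For a directed graph $\mathcal G$ and vertex subset $W$, the induced subgraph on $W$ is path-induced if for all $x,y\in W$ every path from $x$ to $y$ in $\mathcal G$ lies in the induced subgraph. *)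

theory Defs
  imports Main
begin

text \<open>Fc P a x is the set of elements covered by x with label a
  (True = +, False = -). The partial order is the reflexive transitive closure
  of the covering relation.\<close>

record ogp =
  El :: "nat set"
  Fc :: "bool \<Rightarrow> nat \<Rightarrow> nat set"

definition cov :: "ogp \<Rightarrow> (nat \<times> nat) set" where
  "cov P = {(y, x). x \<in> El P \<and> (\<exists>a. y \<in> Fc P a x)}"

definition le :: "ogp \<Rightarrow> nat \<Rightarrow> nat \<Rightarrow> bool" where
  "le P y x \<longleftrightarrow> x \<in> El P \<and> (y, x) \<in> (cov P)\<^sup>*"

definition maxchain :: "ogp \<Rightarrow> nat \<Rightarrow> nat list \<Rightarrow> bool" where
  "maxchain P x cs \<longleftrightarrow> cs \<noteq> [] \<and> hd cs = x \<and>
     (\<forall>i. Suc i < length cs \<longrightarrow> (cs ! Suc i, cs ! i) \<in> cov P) \<and>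
     (\<forall>y. (y, last cs) \<notin> cov P)"

definition ogpos :: "ogp \<Rightarrow> bool" where
  "ogpos P \<longleftrightarrow> finite (El P) \<and>
     (\<forall>a x. Fc P a x \<subseteq> El P) \<and>
     (\<forall>a x. x \<notin> El P \<longrightarrow> Fc P a x = {}) \<and>
     (\<forall>x. Fc P True x \<inter> Fc P False x = {}) \<and>
     acyclic (cov P) \<and>
     (\<forall>y x z. (y, x) \<in> cov P \<longrightarrow> \<not> ((y, z) \<in> (cov P)\<^sup>+ \<and> (z, x) \<in> (cov P)\<^sup>+)) \<and>
     (\<forall>x\<in>El P. \<forall>c1 c2. maxchain P x c1 \<longrightarrow> maxchain P x c2 \<longrightarrow> length c1 = length c2)"

definition dim :: "ogp \<Rightarrow> nat \<Rightarrow> nat" where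
  "dim P x = length (SOME c. maxchain P x c) - 1"

definition dimS :: "ogp \<Rightarrow> nat set \<Rightarrow> int" where
  "dimS P A = (if A = {} then -1 else int (Max (dim P ` A)))"

definition grade :: "ogp \<Rightarrow> nat set \<Rightarrow> nat \<Rightarrow> nat set" where
  "grade P A n = {x \<in> A. dim P x = n}"

definition cl :: "ogp \<Rightarrow> nat set \<Rightarrow> nat set" where
  "cl P A = {y. \<exists>x\<in>A. le P y x}"

definition maxs :: "ogp \<Rightarrow> nat set \<Rightarrow> nat set" where
  "maxs P A = {x \<in> A. \<forall>y\<in>A. le P x y \<longrightarrow> y = x}"

definition nabla :: "ogp \<Rightarrow> bool \<Rightarrow> nat \<Rightarrow> nat set" where
  "nabla P a x = {y \<in> El P. x \<in> Fc P a y}"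

definition DeltaS :: "ogp \<Rightarrow> bool \<Rightarrow> nat \<Rightarrow> nat set \<Rightarrow> nat set" where
  "DeltaS P a n U = {x \<in> U. dim P x = n \<and> nabla P (\<not> a) x \<inter> U = {}}"

definition bd :: "ogp \<Rightarrow> bool \<Rightarrow> int \<Rightarrow> nat set \<Rightarrow> nat set" where
  "bd P a n U = (if n < 0 then {} else
     cl P (DeltaS P a (nat n) U) \<union> (\<Union>k<nat n. cl P (grade P (maxs P U) k)))"

definition bd2 :: "ogp \<Rightarrow> int \<Rightarrow> nat set \<Rightarrow> nat set" where
  "bd2 P n U = bd P False n U \<union> bd P True n U"

definition sub :: "ogp \<Rightarrow> nat set \<Rightarrow> ogp" where
  "sub P A = \<lparr>El = A, Fc = (\<lambda>a x. if x \<in> A then Fc P a x \<inter> A else {})\<rparr>"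

definition ismap :: "(nat \<Rightarrow> nat) \<Rightarrow> ogp \<Rightarrow> ogp \<Rightarrow> bool" where
  "ismap f P Q \<longleftrightarrow> (\<forall>x\<in>El P. f x \<in> El Q) \<and>
     (\<forall>x\<in>El P. \<forall>a (n::nat). f ` bd P a (int n) (cl P {x}) = bd Q a (int n) (cl Q {f x}))"

definition incl :: "(nat \<Rightarrow> nat) \<Rightarrow> ogp \<Rightarrow> ogp \<Rightarrow> bool" where
  "incl f P Q \<longleftrightarrow> ismap f P Q \<and> inj_on f (El P)"

definition iso :: "(nat \<Rightarrow> nat) \<Rightarrow> ogp \<Rightarrow> ogp \<Rightarrow> bool" where
  "iso f P Q \<longleftrightarrow> ismap f P Q \<and> bij_betw f (El P) (El Q) \<and> ismap (inv_into (El P) f) Q P"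

definition round :: "ogp \<Rightarrow> bool" where
  "round U \<longleftrightarrow> (\<forall>n::nat. int n < dimS U (El U) \<longrightarrow>
     bd U False (int n) (El U) \<inter> bd U True (int n) (El U) = bd2 U (int n - 1) (El U))"

section \<open>Pasting and atoms (characterised as pushout cocones, up to isomorphism)\<close>

text \<open>W together with iU, iV is the pushout U #_k V of
  U <- \<partial>^+_k U \<cong> \<partial>^-_k V -> V\<close>
definition is_paste :: "ogp \<Rightarrow> ogp \<Rightarrow> nat \<Rightarrow> ogp \<Rightarrow> (nat \<Rightarrow> nat) \<Rightarrow> (nat \<Rightarrow> nat) \<Rightarrow> bool" where
  "is_paste U V k W iU iV \<longleftrightarrow>
     (\<exists>\<phi>. iso \<phi> (sub U (bd U True (int k) (El U))) (sub V (bd V False (int k) (El V))) \<and>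
       inj_on iU (El U) \<and> inj_on iV (El V) \<and>
       El W = iU ` El U \<union> iV ` El V \<and>
       (\<forall>x\<in>El U. \<forall>y\<in>El V. iU x = iV y \<longleftrightarrow> (x \<in> bd U True (int k) (El U) \<and> y = \<phi> x)) \<and>
       (\<forall>x\<in>El U. \<forall>a. Fc W a (iU x) = iU ` Fc U a x) \<and>
       (\<forall>y\<in>El V. \<forall>a. Fc W a (iV y) = iV ` Fc V a y))"

text \<open>W together with iU, iV and the new top element t is U \<Rightarrow> V, n = dim U = dim V\<close>
definition is_atom :: "ogp \<Rightarrow> ogp \<Rightarrow> nat \<Rightarrow> ogp \<Rightarrow> (nat \<Rightarrow> nat) \<Rightarrow> (nat \<Rightarrow> nat) \<Rightarrow> nat \<Rightarrow> bool" where
  "is_atom U V n W iU iV t \<longleftrightarrow>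
     dimS U (El U) = int n \<and> dimS V (El V) = int n \<and>
     (\<exists>\<psi>. iso \<psi> (sub U (bd2 U (int n - 1) (El U))) (sub V (bd2 V (int n - 1) (El V))) \<and>
       (\<forall>a. \<psi> ` bd U a (int n - 1) (El U) = bd V a (int n - 1) (El V)) \<and>
       inj_on iU (El U) \<and> inj_on iV (El V) \<and>
       t \<notin> iU ` El U \<union> iV ` El V \<and>
       El W = iU ` El U \<union> iV ` El V \<union> {t} \<and>
       (\<forall>x\<in>El U. \<forall>y\<in>El V. iU x = iV y \<longleftrightarrow> (x \<in> bd2 U (int n - 1) (El U) \<and> y = \<psi> x)) \<and>
       (\<forall>x\<in>El U. \<forall>a. Fc W a (iU x) = iU ` Fc U a x) \<and>
       (\<forall>y\<in>El V. \<forall>a. Fc W a (iV y) = iV ` Fc V a y) \<and>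
       Fc W False t = iU ` grade U (El U) n \<and>
       Fc W True t = iV ` grade V (El V) n)"

inductive regmol :: "ogp \<Rightarrow> bool" where
  point: "ogpos P \<Longrightarrow> El P = {p} \<Longrightarrow> regmol P"
| isocl: "regmol U \<Longrightarrow> ogpos W \<Longrightarrow> iso f U W \<Longrightarrow> regmol W"
| paste: "regmol U \<Longrightarrow> regmol V \<Longrightarrow> int k < dimS U (El U) \<Longrightarrow> int k < dimS V (El V) \<Longrightarrow>
          ogpos W \<Longrightarrow> is_paste U V k W iU iV \<Longrightarrow> regmol W"
| atom: "regmol U \<Longrightarrow> regmol V \<Longrightarrow> round U \<Longrightarrow> round V \<Longrightarrow>
          ogpos W \<Longrightarrow> is_atom U V n W iU iV t \<Longrightarrow> regmol W"

inductive subinc :: "(nat \<Rightarrow> nat) \<Rightarrow> ogp \<Rightarrow> ogp \<Rightarrow> bool" where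
  iso: "regmol U \<Longrightarrow> regmol V \<Longrightarrow> iso f U V \<Longrightarrow> subinc f U V"
| inl: "regmol U \<Longrightarrow> regmol V \<Longrightarrow> int k < dimS U (El U) \<Longrightarrow> int k < dimS V (El V) \<Longrightarrow>
          ogpos W \<Longrightarrow> is_paste U V k W iU iV \<Longrightarrow> subinc iU U W"
| inr: "regmol U \<Longrightarrow> regmol V \<Longrightarrow> int k < dimS U (El U) \<Longrightarrow> int k < dimS V (El V) \<Longrightarrow>
          ogpos W \<Longrightarrow> is_paste U V k W iU iV \<Longrightarrow> subinc iV V W"
| comp: "subinc f A B \<Longrightarrow> subinc g B C \<Longrightarrow> subinc (g \<circ> f) A C"
| ext: "subinc f A B \<Longrightarrow> (\<forall>x\<in>El A. f x = g x) \<Longrightarrow> subinc g A B"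

definition DeltaK :: "ogp \<Rightarrow> bool \<Rightarrow> int \<Rightarrow> nat \<Rightarrow> nat set" where
  "DeltaK P a k x = (if k < 0 then {} else DeltaS P a (nat k) (cl P {x}))"

definition fvert :: "ogp \<Rightarrow> int \<Rightarrow> nat set" where
  "fvert U k = {x \<in> El U. int (dim U x) > k}"

definition fedge :: "ogp \<Rightarrow> int \<Rightarrow> nat \<Rightarrow> nat \<Rightarrow> bool" where
  "fedge U k x y \<longleftrightarrow> x \<in> fvert U k \<and> y \<in> fvert U k \<and>
     DeltaK U True k x \<inter> DeltaK U False k y \<noteq> {}"

definition fpath :: "ogp \<Rightarrow> int \<Rightarrow> nat list \<Rightarrow> bool" where
  "fpath U k xs \<longleftrightarrow> xs \<noteq> [] \<and> set xs \<subseteq> fvert U k \<and>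
     (\<forall>i. Suc i < length xs \<longrightarrow> fedge U k (xs ! i) (xs ! Suc i))"

definition path_induced :: "ogp \<Rightarrow> int \<Rightarrow> nat set \<Rightarrow> bool" where
  "path_induced U k W \<longleftrightarrow> W \<subseteq> fvert U k \<and>
     (\<forall>xs. fpath U k xs \<longrightarrow> hd xs \<in> W \<longrightarrow> last xs \<in> W \<longrightarrow> set xs \<subseteq> W)"

end

(* In top dimension the flow graph only sees faces: for n-dimensional elements x, y of an
   n-dimensional oriented graded poset there is an edge x -> y iff some face is an output face
   of x and an input face of y.

   Submolecule inclusions are generated by isomorphisms and the two inclusions into a pasting
   U #_k V under composition. Inclusions preserve dimension and faces, so the intermediate
   molecule of a composite is again n-dimensional and edges between images of top elements are
   reflected; hence path-inducedness is stable under composition. In a pasting U #_k V with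
   k < n there is no edge from a top element y of V to a top element x of U: the common face is
   glued into the output k-boundary of U, where (its dimension n - 1 being at least k) it has no
   coface of input sign, yet it is an input face of x. So the image of U is closed under
   predecessors, the image of V under successors, and a path with both ends in either image
   stays inside it. *)

theory Submission
  imports Defs
begin

section \<open>Dimension in oriented graded posets\<close>

lemma cov_El: "ogpos P \<Longrightarrow> (y, x) \<in> cov P \<Longrightarrow> x \<in> El P \<and> y \<in> El P"
  unfolding cov_def ogpos_def by blast

lemma Fc_El: "ogpos P \<Longrightarrow> Fc P a x \<subseteq> El P"
  unfolding ogpos_def by blast

lemma Fc_disjoint: "ogpos P \<Longrightarrow> z \<in> Fc P a x \<Longrightarrow> z \<notin> Fc P (\<not> a) x"
  unfolding ogpos_def by (cases a) auto

lemma El_of_Fc: "ogpos P \<Longrightarrow> z \<in> Fc P a x \<Longrightarrow> x \<in> El P"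
  unfolding ogpos_def by blast

lemma wf_cov:
  assumes "ogpos P"
  shows "wf (cov P)"
proof -
  have "cov P \<subseteq> El P \<times> El P"
    using cov_El[OF assms] by auto
  then have "finite (cov P)"
    using assms unfolding ogpos_def by (meson finite_SigmaI finite_subset)
  then show ?thesis
    using finite_acyclic_wf assms unfolding ogpos_def by blast
qed

lemma maxchain_Cons: "maxchain P y cs \<Longrightarrow> (y, x) \<in> cov P \<Longrightarrow> maxchain P x (x # cs)"
  unfolding maxchain_def by (auto simp: nth_Cons hd_conv_nth split: nat.splits)

lemma maxchain_exists:
  assumes "ogpos P"
  shows "\<exists>cs. maxchain P x cs"
proof (induction x rule: wf_induct_rule[OF wf_cov[OF assms]])
  case (1 x)
  show ?case
  proof (cases "\<exists>y. (y, x) \<in> cov P")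
    case True
    then obtain y cs where "(y, x) \<in> cov P" "maxchain P y cs"
      using 1 by blast
    then show ?thesis
      using maxchain_Cons by blast
  next
    case False
    then have "maxchain P x [x]"
      unfolding maxchain_def by auto
    then show ?thesis ..
  qed
qed

lemma dim_eq_of_maxchain:
  assumes "ogpos P" and "x \<in> El P" and "maxchain P x cs"
  shows "dim P x = length cs - 1"
proof -
  have "maxchain P x (SOME cs. maxchain P x cs)"
    using assms(3) by (rule someI)
  then show ?thesis
    using assms unfolding dim_def ogpos_def by metis
qed

lemma dim_cov:
  assumes "ogpos P" and "(y, x) \<in> cov P"
  shows "dim P x = Suc (dim P y)"
proof -
  obtain cs where cs: "maxchain P y cs"
    using maxchain_exists[OF assms(1)] by blast
  then have "cs \<noteq> []"
    unfolding maxchain_def by simp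
  moreover have "dim P x = length cs"
    using dim_eq_of_maxchain[OF assms(1) _ maxchain_Cons[OF cs assms(2)]] cov_El[OF assms] by simp
  moreover have "dim P y = length cs - 1"
    using dim_eq_of_maxchain[OF assms(1) _ cs] cov_El[OF assms] by blast
  ultimately show ?thesis
    by (cases cs) auto
qed

lemma dim_eq_0:
  assumes "ogpos P" and "x \<in> El P" and "\<nexists>y. (y, x) \<in> cov P"
  shows "dim P x = 0"
proof -
  have "maxchain P x [x]"
    using assms(3) unfolding maxchain_def by auto
  then show ?thesis
    using dim_eq_of_maxchain[OF assms(1,2)] by force
qed

lemma Fc_eq_empty_of_dim_0:
  assumes "ogpos P" and "x \<in> El P" and "dim P x = 0"
  shows "Fc P a x = {}"
  using assms dim_cov[OF assms(1), of _ x] unfolding cov_def by fastforce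

lemma dim_less_of_trancl:
  assumes "ogpos P" and "(y, x) \<in> (cov P)\<^sup>+"
  shows "dim P y < dim P x"
  using assms(2) by (induction rule: trancl_induct) (auto simp: dim_cov[OF assms(1)])

lemma le_refl: "x \<in> El P \<Longrightarrow> le P x x"
  unfolding le_def by simp

lemma le_trans: "le P z y \<Longrightarrow> le P y x \<Longrightarrow> le P z x"
  unfolding le_def by auto

lemma le_of_cov: "(y, x) \<in> cov P \<Longrightarrow> le P y x"
  unfolding le_def cov_def by auto

lemma le_El: "ogpos P \<Longrightarrow> le P y x \<Longrightarrow> y \<in> El P"
  unfolding le_def by (metis cov_El rtrancl_eq_or_trancl tranclD)

lemma le_dim_less: "ogpos P \<Longrightarrow> le P y x \<Longrightarrow> y \<noteq> x \<Longrightarrow> dim P y < dim P x"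
  unfolding le_def using dim_less_of_trancl by (metis rtrancl_eq_or_trancl)

lemma le_dim: "ogpos P \<Longrightarrow> le P y x \<Longrightarrow> dim P y \<le> dim P x"
  using le_dim_less by fastforce

lemma le_eq_of_dim_eq: "ogpos P \<Longrightarrow> le P y x \<Longrightarrow> dim P y = dim P x \<Longrightarrow> y = x"
  using le_dim_less by fastforce

lemma le_antisym: "ogpos P \<Longrightarrow> le P x y \<Longrightarrow> le P y x \<Longrightarrow> x = y"
  by (meson le_dim le_eq_of_dim_eq antisym)

lemma cov_of_le:
  assumes "ogpos P" and "le P y x" and "Suc (dim P y) = dim P x"
  shows "(y, x) \<in> cov P"
proof -
  have "(y, x) \<in> (cov P)\<^sup>+"
    using assms(2,3) unfolding le_def by (metis n_not_Suc_n rtranclD)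
  then obtain z where yz: "(y, z) \<in> (cov P)\<^sup>*" and zx: "(z, x) \<in> cov P"
    using tranclD2 by metis
  have "le P y z"
    using yz cov_El[OF assms(1) zx] unfolding le_def by blast
  moreover have "dim P z = dim P y"
    using dim_cov[OF assms(1) zx] assms(3) by simp
  ultimately show ?thesis
    using zx le_eq_of_dim_eq[OF assms(1)] by metis
qed

lemma cl_El: "ogpos P \<Longrightarrow> cl P A \<subseteq> El P"
  unfolding cl_def using le_El by blast

lemma mem_cl_self: "x \<in> El P \<Longrightarrow> x \<in> cl P {x}"
  unfolding cl_def using le_refl by blast

lemma nabla_disjoint_cl_self:
  assumes "ogpos P"
  shows "nabla P b x \<inter> cl P {x} = {}"
proof -
  have "\<not> le P w x" if "w \<in> nabla P b x" for w
  proof -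
    have "(x, w) \<in> cov P"
      using that unfolding nabla_def cov_def by auto
    then show ?thesis
      using dim_cov[OF assms] le_dim[OF assms] by fastforce
  qed
  then show ?thesis
    unfolding cl_def by blast
qed

lemma dim_le_dimS: "ogpos P \<Longrightarrow> x \<in> El P \<Longrightarrow> int (dim P x) \<le> dimS P (El P)"
  unfolding dimS_def ogpos_def by auto

lemma dimS_attained:
  assumes "ogpos P" and "El P \<noteq> {}"
  shows "\<exists>x\<in>El P. dimS P (El P) = int (dim P x)"
proof -
  have "Max (dim P ` El P) \<in> dim P ` El P"
    using assms unfolding ogpos_def by (intro Max_in) auto
  then show ?thesis
    using assms(2) unfolding dimS_def by force
qed

section \<open>Boundaries of closures of elements\<close>

lemma DeltaS_subset_bd: "A \<subseteq> El P \<Longrightarrow> DeltaS P a m A \<subseteq> bd P a (int m) A"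
  unfolding bd_def cl_def DeltaS_def using le_refl by fastforce

lemma bd_cl_subset: "bd P a (int m) (cl P {x}) \<subseteq> cl P {x}"
  unfolding bd_def cl_def DeltaS_def grade_def maxs_def using le_trans by auto

lemma DeltaS_of_mem_bd:
  assumes "ogpos P" and "z \<in> bd P a (int m) A" and "m \<le> dim P z"
  shows "dim P z = m \<and> z \<in> DeltaS P a m A"
proof -
  have "z \<in> cl P (DeltaS P a m A) \<or> (\<exists>k<m. z \<in> cl P (grade P (maxs P A) k))"
    using assms(2) unfolding bd_def by auto
  then show ?thesis
  proof
    assume "z \<in> cl P (DeltaS P a m A)"
    then obtain w where w: "w \<in> DeltaS P a m A" "le P z w"
      unfolding cl_def by blast
    then have "dim P w = m"
      unfolding DeltaS_def by simp
    then have "z = w"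
      using le_dim[OF assms(1) w(2)] le_eq_of_dim_eq[OF assms(1) w(2)] assms(3) by simp
    then show ?thesis
      using w \<open>dim P w = m\<close> by simp
  next
    assume "\<exists>k<m. z \<in> cl P (grade P (maxs P A) k)"
    then obtain k w where "k < m" "le P z w" "dim P w = k"
      unfolding cl_def grade_def by blast
    then show ?thesis
      using le_dim[OF assms(1)] assms(3) by fastforce
  qed
qed

lemma not_Fc_opposite_of_mem_bd:
  assumes "ogpos P" and "z \<in> bd P a (int m) A" and "m \<le> dim P z" and "x \<in> A"
  shows "z \<notin> Fc P (\<not> a) x"
  using DeltaS_of_mem_bd[OF assms(1-3)] assms(4) El_of_Fc[OF assms(1)]
  unfolding DeltaS_def nabla_def by blast

lemma DeltaS_cl_eq_Fc:
  assumes "ogpos P" and "x \<in> El P" and "dim P x = Suc m"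
  shows "DeltaS P a m (cl P {x}) = Fc P a x"
proof (intro equalityI subsetI)
  fix z assume z: "z \<in> DeltaS P a m (cl P {x})"
  then have "le P z x" "Suc (dim P z) = dim P x"
    using assms(3) unfolding DeltaS_def cl_def by auto
  then obtain b where b: "z \<in> Fc P b x"
    using cov_of_le[OF assms(1)] unfolding cov_def by blast
  have "x \<notin> nabla P (\<not> a) z"
    using z mem_cl_self[OF assms(2)] unfolding DeltaS_def by blast
  then have "b = a"
    using b assms(2) unfolding nabla_def by (cases a; cases b) auto
  then show "z \<in> Fc P a x"
    using b by simp
next
  fix z assume z: "z \<in> Fc P a x"
  then have zx: "(z, x) \<in> cov P"
    using assms(2) unfolding cov_def by blast
  then have dz: "dim P z = m"
    using dim_cov[OF assms(1)] assms(3) by simp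
  have "w \<notin> nabla P (\<not> a) z" if "le P w x" for w
  proof
    assume "w \<in> nabla P (\<not> a) z"
    then have "(z, w) \<in> cov P" "z \<in> Fc P (\<not> a) w"
      unfolding nabla_def cov_def by auto
    then have "w = x"
      using dim_cov[OF assms(1)] dz assms(3) le_eq_of_dim_eq[OF assms(1) that] by simp
    then show False
      using Fc_disjoint[OF assms(1) z] \<open>z \<in> Fc P (\<not> a) w\<close> by simp
  qed
  then show "z \<in> DeltaS P a m (cl P {x})"
    using le_of_cov[OF zx] dz unfolding DeltaS_def cl_def by auto
qed

lemma DeltaK_top_eq_Fc:
  assumes "ogpos P" and "x \<in> El P" and "dim P x = n"
  shows "DeltaK P a (int n - 1) x = Fc P a x"
proof (cases n)
  case 0
  then show ?thesis
    using Fc_eq_empty_of_dim_0[OF assms(1,2)] assms(3) unfolding DeltaK_def by simp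
next
  case (Suc m)
  then show ?thesis
    using DeltaS_cl_eq_Fc[OF assms(1,2)] assms(3) unfolding DeltaK_def by simp
qed

lemma Fc_eq_bd_cl_top:
  assumes "ogpos P" and "x \<in> El P" and "dim P x = Suc m"
  shows "{z \<in> bd P a (int m) (cl P {x}). dim P z = m} = Fc P a x"
  using DeltaS_of_mem_bd[OF assms(1)] DeltaS_subset_bd[OF cl_El[OF assms(1)]]
    DeltaS_cl_eq_Fc[OF assms] unfolding DeltaS_def by blast

lemma mem_bd_cl_self_iff:
  assumes "ogpos P" and "x \<in> El P"
  shows "x \<in> bd P a (int m) (cl P {x}) \<longleftrightarrow> dim P x \<le> m"
proof
  assume "x \<in> bd P a (int m) (cl P {x})"
  then show "dim P x \<le> m"
    using DeltaS_of_mem_bd[OF assms(1)] by fastforce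
next
  assume le: "dim P x \<le> m"
  have x_max: "x \<in> maxs P (cl P {x})"
    using mem_cl_self[OF assms(2)] le_antisym[OF assms(1)] unfolding maxs_def cl_def by blast
  show "x \<in> bd P a (int m) (cl P {x})"
  proof (cases "dim P x = m")
    case True
    then have "x \<in> DeltaS P a m (cl P {x})"
      using mem_cl_self[OF assms(2)] nabla_disjoint_cl_self[OF assms(1)] unfolding DeltaS_def by blast
    then show ?thesis
      using DeltaS_subset_bd[OF cl_El[OF assms(1)]] by blast
  next
    case False
    then have "x \<in> cl P (grade P (maxs P (cl P {x})) (dim P x))"
      using x_max mem_cl_self[OF assms(2)] unfolding grade_def cl_def by blast
    then show ?thesis
      using le False unfolding bd_def by auto
  qed
qed

section \<open>Embeddings\<close>

definition ogp_embedding :: "(nat \<Rightarrow> nat) \<Rightarrow> ogp \<Rightarrow> ogp \<Rightarrow> bool" where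
  "ogp_embedding f P Q \<longleftrightarrow> f ` El P \<subseteq> El Q \<and> inj_on f (El P) \<and>
     (\<forall>x\<in>El P. \<forall>a. Fc Q a (f x) = f ` Fc P a x)"

lemma ogp_embedding_El: "ogp_embedding f P Q \<Longrightarrow> x \<in> El P \<Longrightarrow> f x \<in> El Q"
  unfolding ogp_embedding_def by blast

lemma ogp_embedding_inj_on: "ogp_embedding f P Q \<Longrightarrow> inj_on f (El P)"
  unfolding ogp_embedding_def by blast

lemma ogp_embedding_Fc: "ogp_embedding f P Q \<Longrightarrow> x \<in> El P \<Longrightarrow> Fc Q a (f x) = f ` Fc P a x"
  unfolding ogp_embedding_def by blast

lemma ogp_embedding_comp:
  assumes f: "ogp_embedding f A B" and g: "ogp_embedding g B C"
  shows "ogp_embedding (g \<circ> f) A C"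
  unfolding ogp_embedding_def
proof (intro conjI ballI allI)
  have "f ` El A \<subseteq> El B"
    using f unfolding ogp_embedding_def by blast
  then show "(g \<circ> f) ` El A \<subseteq> El C" "inj_on (g \<circ> f) (El A)"
    using f g unfolding ogp_embedding_def by (auto intro: comp_inj_on inj_on_subset)
  fix x a assume "x \<in> El A"
  then show "Fc C a ((g \<circ> f) x) = (g \<circ> f) ` Fc A a x"
    using ogp_embedding_Fc[OF g ogp_embedding_El[OF f]] ogp_embedding_Fc[OF f]
    by (simp add: image_image)
qed

lemma ogp_embedding_cong:
  assumes "ogp_embedding f A B" and "ogpos A" and "\<forall>x\<in>El A. f x = g x"
  shows "ogp_embedding g A B"
proof -
  have "g ` Fc A a x = f ` Fc A a x" for a x
    using Fc_El[OF assms(2), of a x] assms(3) by (force intro!: image_cong)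
  then show ?thesis
    using assms(1,3) inj_on_cong[of "El A" f g] unfolding ogp_embedding_def by auto
qed

lemma ogp_embedding_cov_iff:
  assumes "ogp_embedding f P Q" and "x \<in> El P"
  shows "(w, f x) \<in> cov Q \<longleftrightarrow> (\<exists>y. (y, x) \<in> cov P \<and> w = f y)"
  using assms unfolding ogp_embedding_def cov_def by auto

lemma ogp_embedding_dim:
  assumes f: "ogp_embedding f P Q" and P: "ogpos P" and Q: "ogpos Q" and x: "x \<in> El P"
  shows "dim Q (f x) = dim P x"
  using x
proof (induction x rule: wf_induct_rule[OF wf_cov[OF P]])
  case (1 x)
  show ?case
  proof (cases "\<exists>y. (y, x) \<in> cov P")
    case True
    then obtain y where y: "(y, x) \<in> cov P" by blast
    then have "(f y, f x) \<in> cov Q"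
      using ogp_embedding_cov_iff[OF f \<open>x \<in> El P\<close>] by blast
    then show ?thesis
      using dim_cov[OF Q] dim_cov[OF P y] 1(1)[OF y] cov_El[OF P y] by simp
  next
    case False
    then have "\<nexists>w. (w, f x) \<in> cov Q"
      using ogp_embedding_cov_iff[OF f 1(2)] by blast
    then show ?thesis
      using dim_eq_0[OF Q ogp_embedding_El[OF f 1(2)]] dim_eq_0[OF P 1(2) False] by simp
  qed
qed

lemma ogp_embedding_fvert_iff:
  assumes "ogp_embedding f P Q" and "ogpos P" and "ogpos Q" and "x \<in> El P"
  shows "f x \<in> fvert Q k \<longleftrightarrow> x \<in> fvert P k"
  using assms ogp_embedding_dim ogp_embedding_El unfolding fvert_def by fastforce

lemma ogp_embedding_dimS_mono:
  assumes f: "ogp_embedding f P Q" and P: "ogpos P" and Q: "ogpos Q"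
  shows "dimS P (El P) \<le> dimS Q (El Q)"
proof (cases "El P = {}")
  case True
  then show ?thesis
    unfolding dimS_def by simp
next
  case False
  then obtain x where "x \<in> El P" "dimS P (El P) = int (dim P x)"
    using dimS_attained[OF P] by blast
  then show ?thesis
    using dim_le_dimS[OF Q ogp_embedding_El[OF f]] ogp_embedding_dim[OF f P Q] by metis
qed

text \<open>The dimension of an element is read off from which boundaries of its closure contain it,
  and its faces are the top-dimensional elements of these boundaries; maps preserve both.\<close>

lemma ismap_dim:
  assumes P: "ogpos P" and Q: "ogpos Q" and f: "ismap f P Q" "inj_on f (El P)" and x: "x \<in> El P"
  shows "dim Q (f x) = dim P x"
proof -
  have fx: "f x \<in> El Q"
    using f x unfolding ismap_def by blast
  have bd_eq: "f ` bd P True (int m) (cl P {x}) = bd Q True (int m) (cl Q {f x})" for m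
    using f x unfolding ismap_def by blast
  have "f x \<in> bd Q True (int (dim P x)) (cl Q {f x})"
    using bd_eq mem_bd_cl_self_iff[OF P x] by blast
  then have "dim Q (f x) \<le> dim P x"
    using mem_bd_cl_self_iff[OF Q fx] by blast
  moreover
  obtain z where z: "z \<in> bd P True (int (dim Q (f x))) (cl P {x})" "f z = f x"
    using bd_eq mem_bd_cl_self_iff[OF Q fx] by (metis imageE order_refl)
  then have "z = x"
    using f(2) x bd_cl_subset cl_El[OF P] unfolding inj_on_def by blast
  then have "dim P x \<le> dim Q (f x)"
    using z(1) mem_bd_cl_self_iff[OF P x] by blast
  ultimately show ?thesis
    by simp
qed

lemma ogp_embedding_of_incl:
  assumes P: "ogpos P" and Q: "ogpos Q" and f: "incl f P Q"
  shows "ogp_embedding f P Q"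
  unfolding ogp_embedding_def
proof (intro conjI ballI allI)
  have map: "ismap f P Q" and inj: "inj_on f (El P)"
    using f unfolding incl_def by simp_all
  then show "f ` El P \<subseteq> El Q" "inj_on f (El P)"
    unfolding ismap_def by blast+
  fix x a assume x: "x \<in> El P"
  have fx: "f x \<in> El Q"
    using map x unfolding ismap_def by blast
  show "Fc Q a (f x) = f ` Fc P a x"
  proof (cases "dim P x")
    case 0
    then show ?thesis
      using Fc_eq_empty_of_dim_0[OF P x] Fc_eq_empty_of_dim_0[OF Q fx] ismap_dim[OF P Q map inj x]
      by simp
  next
    case (Suc m)
    have dim_eq: "dim Q (f y) = dim P y" if "y \<in> bd P a (int m) (cl P {x})" for y
      using ismap_dim[OF P Q map inj] that bd_cl_subset cl_El[OF P] by blast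
    have "Fc Q a (f x) = {z \<in> bd Q a (int m) (cl Q {f x}). dim Q z = m}"
      using Fc_eq_bd_cl_top[OF Q fx] ismap_dim[OF P Q map inj x] Suc by simp
    also have "\<dots> = {z \<in> f ` bd P a (int m) (cl P {x}). dim Q z = m}"
      using map x unfolding ismap_def by simp
    also have "\<dots> = f ` {z \<in> bd P a (int m) (cl P {x}). dim P z = m}"
      using dim_eq by force
    also have "\<dots> = f ` Fc P a x"
      using Fc_eq_bd_cl_top[OF P x Suc] by simp
    finally show ?thesis .
  qed
qed

section \<open>Submolecule inclusions\<close>

lemma regmol_ogpos: "regmol P \<Longrightarrow> ogpos P"
  by (induction rule: regmol.induct) auto

lemma paste_El: "is_paste U V k W iU iV \<Longrightarrow> El W = iU ` El U \<union> iV ` El V"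
  unfolding is_paste_def by (elim exE conjE)

lemma paste_ogp_embedding_left: "is_paste U V k W iU iV \<Longrightarrow> ogp_embedding iU U W"
  unfolding is_paste_def ogp_embedding_def by (elim exE conjE) blast

lemma paste_ogp_embedding_right: "is_paste U V k W iU iV \<Longrightarrow> ogp_embedding iV V W"
  unfolding is_paste_def ogp_embedding_def by (elim exE conjE) blast

lemma paste_identified_mem_bd:
  "is_paste U V k W iU iV \<Longrightarrow> x \<in> El U \<Longrightarrow> y \<in> El V \<Longrightarrow> iU x = iV y \<Longrightarrow>
     x \<in> bd U True (int k) (El U)"
  unfolding is_paste_def by (elim exE conjE) blast

lemma incl_of_iso: "iso f P Q \<Longrightarrow> incl f P Q"
  unfolding iso_def incl_def using bij_betw_imp_inj_on by blast

lemma subinc_ogp_embedding: "subinc f A B \<Longrightarrow> ogpos A \<and> ogpos B \<and> ogp_embedding f A B"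
proof (induction rule: subinc.induct)
  case (iso U V f)
  then show ?case
    using regmol_ogpos ogp_embedding_of_incl[OF _ _ incl_of_iso] by blast
next
  case (inl U V k W iU iV)
  then show ?case
    using regmol_ogpos[OF inl(1)] paste_ogp_embedding_left[OF inl(6)] by simp
next
  case (inr U V k W iU iV)
  then show ?case
    using regmol_ogpos[OF inr(2)] paste_ogp_embedding_right[OF inr(6)] by simp
next
  case (comp f A B g C)
  then show ?case
    using ogp_embedding_comp[of f A B g C] by blast
next
  case (ext f A B g)
  then show ?case
    using ogp_embedding_cong[of f A B g] by simp
qed

section \<open>Flow graphs\<close>

lemma successively_iff_nth:
  "successively R xs \<longleftrightarrow> (\<forall>i. Suc i < length xs \<longrightarrow> R (xs ! i) (xs ! Suc i))"
proof (induction R xs rule: successively.induct)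
  case (3 R x y xs)
  then show ?case
    by (auto simp: nth_Cons split: nat.splits)
qed auto

lemma fpath_iff_successively:
  "fpath U k xs \<longleftrightarrow> xs \<noteq> [] \<and> set xs \<subseteq> fvert U k \<and> successively (fedge U k) xs"
  unfolding fpath_def successively_iff_nth ..

lemma set_subset_of_successively_closed:
  assumes "successively R xs" and "xs \<noteq> []" and "hd xs \<in> S"
    and "\<And>u v. R u v \<Longrightarrow> u \<in> S \<Longrightarrow> v \<in> S"
  shows "set xs \<subseteq> S"
  using assms by (induction R xs rule: successively.induct) auto

lemma path_induced_of_forward_closed:
  assumes "S \<subseteq> fvert U k" and "\<And>u v. fedge U k u v \<Longrightarrow> u \<in> S \<Longrightarrow> v \<in> S"
  shows "path_induced U k S"
  using assms set_subset_of_successively_closed[of "fedge U k" _ S]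
  unfolding path_induced_def fpath_iff_successively by blast

lemma path_induced_of_backward_closed:
  assumes "S \<subseteq> fvert U k" and "\<And>u v. fedge U k u v \<Longrightarrow> v \<in> S \<Longrightarrow> u \<in> S"
  shows "path_induced U k S"
proof -
  have "set xs \<subseteq> S" if "successively (fedge U k) xs" "xs \<noteq> []" "last xs \<in> S" for xs
    using set_subset_of_successively_closed[of "\<lambda>u v. fedge U k v u" "rev xs" S] that assms(2)
    by (simp add: hd_rev)
  then show ?thesis
    using assms(1) unfolding path_induced_def fpath_iff_successively by blast
qed

lemma path_induced_fvert: "path_induced U k (fvert U k)"
  unfolding path_induced_def fpath_def by blast

lemma dim_of_mem_fvert_top:
  assumes "ogpos P" and "dimS P (El P) = int n" and "x \<in> fvert P (int n - 1)"
  shows "dim P x = n"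
proof -
  have "x \<in> El P" "int (dim P x) > int n - 1"
    using assms(3) unfolding fvert_def by auto
  then show ?thesis
    using dim_le_dimS[OF assms(1)] assms(2) by fastforce
qed

lemma fedge_top_iff:
  assumes "ogpos P" and "dimS P (El P) = int n"
  shows "fedge P (int n - 1) u v \<longleftrightarrow>
    u \<in> fvert P (int n - 1) \<and> v \<in> fvert P (int n - 1) \<and> Fc P True u \<inter> Fc P False v \<noteq> {}"
proof -
  have "DeltaK P a (int n - 1) x = Fc P a x" if "x \<in> fvert P (int n - 1)" for a x
    using DeltaK_top_eq_Fc[OF assms(1)] dim_of_mem_fvert_top[OF assms that] that
    unfolding fvert_def by blast
  then show ?thesis
    unfolding fedge_def by auto
qed

lemma ogp_embedding_fedge_top_iff:
  assumes f: "ogp_embedding f P Q" and P: "ogpos P" and Q: "ogpos Q"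
    and dP: "dimS P (El P) = int n" and dQ: "dimS Q (El Q) = int n"
    and x: "x \<in> El P" and y: "y \<in> El P"
  shows "fedge Q (int n - 1) (f x) (f y) \<longleftrightarrow> fedge P (int n - 1) x y"
proof -
  have "Fc Q True (f x) \<inter> Fc Q False (f y) = f ` (Fc P True x \<inter> Fc P False y)"
    using ogp_embedding_Fc[OF f] x y
      inj_on_image_Int[OF ogp_embedding_inj_on[OF f] Fc_El[OF P] Fc_El[OF P]] by simp
  then show ?thesis
    unfolding fedge_top_iff[OF P dP] fedge_top_iff[OF Q dQ]
    using ogp_embedding_fvert_iff[OF f P Q] x y by simp
qed

lemma path_induced_comp:
  assumes f: "ogp_embedding f A B" and g: "ogp_embedding g B C"
    and A: "ogpos A" and B: "ogpos B" and C: "ogpos C"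
    and dB: "dimS B (El B) = int n" and dC: "dimS C (El C) = int n"
    and f_induced: "path_induced B (int n - 1) (f ` fvert A (int n - 1))"
    and g_induced: "path_induced C (int n - 1) (g ` fvert B (int n - 1))"
  shows "path_induced C (int n - 1) ((g \<circ> f) ` fvert A (int n - 1))"
  unfolding path_induced_def image_comp[symmetric]
proof (intro conjI allI impI)
  let ?T = "fvert B (int n - 1)" and ?S = "f ` fvert A (int n - 1)"
  have ST: "?S \<subseteq> ?T" and TB: "?T \<subseteq> El B"
    using f_induced unfolding path_induced_def fvert_def by auto
  then show "g ` ?S \<subseteq> fvert C (int n - 1)"
    using g_induced unfolding path_induced_def by blast
  fix xs assume xs: "fpath C (int n - 1) xs" "hd xs \<in> g ` ?S" "last xs \<in> g ` ?S"
  then have "xs \<in> lists (g ` ?T)"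
    using g_induced ST unfolding path_induced_def by blast
  then obtain ys where ys: "ys \<in> lists ?T" and xs_eq: "xs = map g ys"
    unfolding lists_image by blast
  have ys_El: "set ys \<subseteq> El B"
    using ys TB by auto
  have "successively (\<lambda>x y. fedge C (int n - 1) (g x) (g y)) ys"
    using xs(1) unfolding fpath_iff_successively xs_eq successively_map by blast
  then have "successively (fedge B (int n - 1)) ys"
    by (rule successively_mono) (use ogp_embedding_fedge_top_iff[OF g B C dB dC] ys_El in blast)
  then have "fpath B (int n - 1) ys"
    using xs(1) ys unfolding fpath_iff_successively xs_eq by auto
  moreover have "hd ys \<in> ?S" "last ys \<in> ?S"
  proof -
    have "ys \<noteq> []" "g (hd ys) \<in> g ` ?S" "g (last ys) \<in> g ` ?S"
      using xs unfolding fpath_def xs_eq by (auto simp: hd_map last_map)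
    moreover have "hd ys \<in> El B" "last ys \<in> El B"
      using ys_El \<open>ys \<noteq> []\<close> by auto
    ultimately show "hd ys \<in> ?S" "last ys \<in> ?S"
      using inj_on_image_mem_iff[OF ogp_embedding_inj_on[OF g] _ order_trans[OF ST TB]] by blast+
  qed
  ultimately have "set ys \<subseteq> ?S"
    using f_induced unfolding path_induced_def by blast
  then show "set xs \<subseteq> g ` ?S"
    using xs_eq by auto
qed

lemma paste_no_top_fedge_right_to_left:
  assumes p: "is_paste U V k W iU iV" and U: "ogpos U" and V: "ogpos V" and W: "ogpos W"
    and dW: "dimS W (El W) = int n" and k: "k < n"
    and x: "x \<in> El U" and y: "y \<in> El V" and top: "iU x \<in> fvert W (int n - 1)"
  shows "\<not> fedge W (int n - 1) (iV y) (iU x)"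
proof
  have eU: "ogp_embedding iU U W" and eV: "ogp_embedding iV V W"
    using paste_ogp_embedding_left[OF p] paste_ogp_embedding_right[OF p] .
  assume "fedge W (int n - 1) (iV y) (iU x)"
  then have "Fc W True (iV y) \<inter> Fc W False (iU x) \<noteq> {}"
    unfolding fedge_top_iff[OF W dW] by (elim conjE)
  then have "iV ` Fc V True y \<inter> iU ` Fc U False x \<noteq> {}"
    unfolding ogp_embedding_Fc[OF eU x] ogp_embedding_Fc[OF eV y] .
  then obtain z where "z \<in> iU ` Fc U False x" "z \<in> iV ` Fc V True y"
    by blast
  then obtain x' y' where x': "x' \<in> Fc U False x" and y': "y' \<in> Fc V True y"
    and glued: "iU x' = iV y'"
    by (metis imageE)
  have bd: "x' \<in> bd U True (int k) (El U)"
    using paste_identified_mem_bd[OF p _ _ glued] x' y' Fc_El[OF U] Fc_El[OF V] by blast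
  have "dim U x = n"
    using dim_of_mem_fvert_top[OF W dW top] ogp_embedding_dim[OF eU U W x] by simp
  moreover have "dim U x = Suc (dim U x')"
    using dim_cov[OF U] x' x unfolding cov_def by blast
  ultimately have "k \<le> dim U x'"
    using k by simp
  then have "x' \<notin> Fc U (\<not> True) x"
    using not_Fc_opposite_of_mem_bd[OF U bd _ x] by blast
  then show False
    using x' by simp
qed

lemma path_induced_paste_left:
  assumes p: "is_paste U V k W iU iV" and U: "ogpos U" and V: "ogpos V" and W: "ogpos W"
    and dW: "dimS W (El W) = int n" and k: "k < n"
  shows "path_induced W (int n - 1) (iU ` fvert U (int n - 1))"
proof (rule path_induced_of_backward_closed)
  have eU: "ogp_embedding iU U W"
    using paste_ogp_embedding_left[OF p] .
  show "iU ` fvert U (int n - 1) \<subseteq> fvert W (int n - 1)"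
    using ogp_embedding_fvert_iff[OF eU U W] unfolding fvert_def by blast
  fix u v
  assume e: "fedge W (int n - 1) u v" and "v \<in> iU ` fvert U (int n - 1)"
  then obtain x where x: "x \<in> fvert U (int n - 1)" and v: "v = iU x"
    by blast
  have u: "u \<in> fvert W (int n - 1)"
    using e unfolding fedge_def by blast
  then consider x0 where "x0 \<in> El U" "u = iU x0" | y where "y \<in> El V" "u = iV y"
    using paste_El[OF p] unfolding fvert_def by blast
  then show "u \<in> iU ` fvert U (int n - 1)"
  proof cases
    case 1
    then show ?thesis
      using u ogp_embedding_fvert_iff[OF eU U W] by blast
  next
    case 2
    have "x \<in> El U" "v \<in> fvert W (int n - 1)"
      using x e unfolding fvert_def fedge_def by auto
    then show ?thesis
      using paste_no_top_fedge_right_to_left[OF p U V W dW k] e 2 v by blast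
  qed
qed

lemma path_induced_paste_right:
  assumes p: "is_paste U V k W iU iV" and U: "ogpos U" and V: "ogpos V" and W: "ogpos W"
    and dW: "dimS W (El W) = int n" and k: "k < n"
  shows "path_induced W (int n - 1) (iV ` fvert V (int n - 1))"
proof (rule path_induced_of_forward_closed)
  have eV: "ogp_embedding iV V W"
    using paste_ogp_embedding_right[OF p] .
  show "iV ` fvert V (int n - 1) \<subseteq> fvert W (int n - 1)"
    using ogp_embedding_fvert_iff[OF eV V W] unfolding fvert_def by blast
  fix u v
  assume e: "fedge W (int n - 1) u v" and "u \<in> iV ` fvert V (int n - 1)"
  then obtain y where y: "y \<in> fvert V (int n - 1)" and u: "u = iV y"
    by blast
  have v: "v \<in> fvert W (int n - 1)"
    using e unfolding fedge_def by blast
  then consider x where "x \<in> El U" "v = iU x" | y0 where "y0 \<in> El V" "v = iV y0"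
    using paste_El[OF p] unfolding fvert_def by blast
  then show "v \<in> iV ` fvert V (int n - 1)"
  proof cases
    case 1
    have "y \<in> El V"
      using y unfolding fvert_def by blast
    then show ?thesis
      using paste_no_top_fedge_right_to_left[OF p U V W dW k] e 1 u v by blast
  next
    case 2
    then show ?thesis
      using v ogp_embedding_fvert_iff[OF eV V W] by blast
  qed
qed

lemma path_induced_iso:
  assumes "iso f U V" and "ogpos U" and "ogpos V"
  shows "path_induced V k (f ` fvert U k)"
proof -
  have e: "ogp_embedding f U V"
    using ogp_embedding_of_incl[OF assms(2,3) incl_of_iso[OF assms(1)]] .
  have onto: "f ` El U = El V"
    using assms(1) bij_betw_imp_surj_on unfolding iso_def by blast
  have "f ` fvert U k = fvert V k"
  proof (intro equalityI subsetI)
    fix y assume "y \<in> f ` fvert U k"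
    then show "y \<in> fvert V k"
      using ogp_embedding_fvert_iff[OF e assms(2,3)] unfolding fvert_def by auto
  next
    fix y assume y: "y \<in> fvert V k"
    then obtain x where "x \<in> El U" "y = f x"
      using onto unfolding fvert_def by auto
    then show "y \<in> f ` fvert U k"
      using y ogp_embedding_fvert_iff[OF e assms(2,3)] by blast
  qed
  then show ?thesis
    using path_induced_fvert by simp
qed

lemma path_induced_of_subinc:
  "subinc f A B \<Longrightarrow> dimS A (El A) = int n \<Longrightarrow> dimS B (El B) = int n \<Longrightarrow>
    path_induced B (int n - 1) (f ` fvert A (int n - 1))"
proof (induction arbitrary: n rule: subinc.induct)
  case (iso U V f)
  then show ?case
    using path_induced_iso[OF iso.hyps(3)] regmol_ogpos by blast
next
  case (inl U V k W iU iV)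
  have "k < n"
    using inl.hyps(3) inl.prems(1) by simp
  then show ?case
    using path_induced_paste_left[OF inl.hyps(6) regmol_ogpos regmol_ogpos inl.hyps(5) inl.prems(2)]
      inl.hyps(1,2) by blast
next
  case (inr U V k W iU iV)
  have "k < n"
    using inr.hyps(4) inr.prems(1) by simp
  then show ?case
    using path_induced_paste_right[OF inr.hyps(6) regmol_ogpos regmol_ogpos inr.hyps(5) inr.prems(2)]
      inr.hyps(1,2) by blast
next
  case (comp f A B g C)
  have A: "ogpos A" and B: "ogpos B" and C: "ogpos C"
    and f: "ogp_embedding f A B" and g: "ogp_embedding g B C"
    using subinc_ogp_embedding[OF comp.hyps(1)] subinc_ogp_embedding[OF comp.hyps(2)] by blast+
  have dB: "dimS B (El B) = int n"
    using ogp_embedding_dimS_mono[OF f A B] ogp_embedding_dimS_mono[OF g B C] comp.prems by simp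
  show ?case
    using path_induced_comp[OF f g A B C dB comp.prems(2) comp.IH(1)[OF comp.prems(1) dB]
        comp.IH(2)[OF dB comp.prems(2)]] .
next
  case (ext f A B g)
  have "f ` fvert A (int n - 1) = g ` fvert A (int n - 1)"
    using ext.hyps(2) unfolding fvert_def by auto
  then show ?case
    using ext.IH ext.prems by simp
qed

theorem proposition3p22:
  fixes U V :: ogp and i :: "nat \<Rightarrow> nat" and n :: nat
  assumes "regmol U" and "regmol V" and "incl i V U"
    and "dimS U (El U) = int n" and "dimS V (El V) = int n"
    and "round V"
    and "subinc i V U"
  shows "path_induced U (int n - 1) (i ` fvert V (int n - 1))"
  using path_induced_of_subinc[OF assms(7,5,4)] .

end
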